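(* For real $a,c,d$ and integer $k$, let \[ \begin{aligned} \lambda(k,a,c,d)={}&k^3\left(6a^4-6a^3+a^2+2ac+2d\right)\\ &+k^2\left(-384a^5+324a^4-42a^3-144a^2c-6ac-192ad-12d\right)\\ &+k\left(4608a^6-3072a^5+618a^4+2304a^3c-36a^3+144a^2c+4608a^2d-a^2+4ac+576ad+22d\right)\\ &+4608a^6-2688a^5-6144a^4c+300a^4-24576a^3d-4608a^2d-384ad-12d. \end{aligned} \] Let $a>\frac{22}{10}$, and let $c,d$ satisfy \[ \tfrac{1}{192}\left(-768a^3+768a^2-160a+7\right)\le c\le \tfrac{1}{512}\left(-1536a^3+1728a^2-424a+25\right), \] \[ \tfrac12\left(-6a^4+6a^3-a^2-2ac\right)\le d\le \tfrac{1}{2048}\left(768a^3-512a^2-512ac+104a+192c-7\right). \] Then there exists an integer $k\ge 4$ such that $\lambda(k,a,c,d)<0$. *)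

theory Defs
  imports Complex_Main
begin

definition lam :: "int \<Rightarrow> real \<Rightarrow> real \<Rightarrow> real \<Rightarrow> real" where
  "lam k a c d =
     (let x = real_of_int k in
      x^3 * (6*a^4 - 6*a^3 + a^2 + 2*a*c + 2*d)
    + x^2 * (-384*a^5 + 324*a^4 - 42*a^3 - 144*a^2*c - 6*a*c - 192*a*d - 12*d)
    + x * (4608*a^6 - 3072*a^5 + 618*a^4 + 2304*a^3*c - 36*a^3 + 144*a^2*c + 4608*a^2*d
           - a^2 + 4*a*c + 576*a*d + 22*d)
    + 4608*a^6 - 2688*a^5 - 6144*a^4*c + 300*a^4 - 24576*a^3*d - 4608*a^2*d - 384*a*d - 12*d)"

end

theory Submission
  imports Defs
begin

(*
  The function lam is affine in (c, d), and the admissible (c, d) form a triangle: the two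
  d-bounds are affine in c and meet at c = c_lower a.  Hence lam is negative on the triangle
  once it is negative at its three vertices.  Take k = \<lfloor>36 a\<rfloor>.  At each vertex lam is a
  polynomial in x = k which, after splitting off a positive factor x - 1 at two of the vertices,
  is linear or a convex quadratic in x; so it suffices to check it at x = 36 a - 1 and x = 36 a.
  These values are polynomials in a whose coefficients all become negative under the shift
  a = 11/5 + b.
*)

lemma convex_quadratic_neg_between:
  fixes \<alpha> \<beta> \<gamma> lo hi z :: real
  assumes "0 \<le> \<alpha>" and "lo \<le> z" and "z \<le> hi"
    and lo_neg: "\<alpha>*lo^2 + \<beta>*lo + \<gamma> < 0" and hi_neg: "\<alpha>*hi^2 + \<beta>*hi + \<gamma> < 0"
  shows "\<alpha>*z^2 + \<beta>*z + \<gamma> < 0"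
proof (cases "z = hi")
  case True
  with hi_neg show ?thesis by simp
next
  case False
  with assms(3) have "z < hi" by simp
  have interpolation: "(hi - lo) * (\<alpha>*z^2 + \<beta>*z + \<gamma>)
      = (hi - z) * (\<alpha>*lo^2 + \<beta>*lo + \<gamma>) + (z - lo) * (\<alpha>*hi^2 + \<beta>*hi + \<gamma>)
        + \<alpha> * (hi - lo) * ((z - lo) * (z - hi))"
    by algebra
  have "(hi - z) * (\<alpha>*lo^2 + \<beta>*lo + \<gamma>) < 0"
    using \<open>z < hi\<close> lo_neg by (simp add: mult_pos_neg)
  moreover have "(z - lo) * (\<alpha>*hi^2 + \<beta>*hi + \<gamma>) \<le> 0"
    using assms(2) hi_neg by (simp add: mult_nonneg_nonpos)
  moreover have "\<alpha> * (hi - lo) * ((z - lo) * (z - hi)) \<le> 0"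
    using assms by (intro mult_nonneg_nonpos mult_nonneg_nonneg) auto
  ultimately have "(hi - lo) * (\<alpha>*z^2 + \<beta>*z + \<gamma>) < 0"
    unfolding interpolation by linarith
  moreover have "0 < hi - lo" using assms(2) \<open>z < hi\<close> by simp
  ultimately show ?thesis by (simp add: mult_less_0_iff)
qed

lemma affine_neg_between:
  fixes f :: "real \<Rightarrow> real"
  assumes affine: "\<And>t. f t = (f 1 - f 0) * t + f 0"
    and "lo \<le> z" and "z \<le> hi" and "f lo < 0" and "f hi < 0"
  shows "f z < 0"
  using convex_quadratic_neg_between[of 0 lo z hi "f 1 - f 0" "f 0"] assms
  by (metis add_0 mult_zero_left order_refl)

definition c_lower :: "real \<Rightarrow> real" where
  "c_lower a = (1/192) * (-768*a^3 + 768*a^2 - 160*a + 7)"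

definition c_upper :: "real \<Rightarrow> real" where
  "c_upper a = (1/512) * (-1536*a^3 + 1728*a^2 - 424*a + 25)"

definition d_lower :: "real \<Rightarrow> real \<Rightarrow> real" where
  "d_lower a c = (1/2) * (-6*a^4 + 6*a^3 - a^2 - 2*a*c)"

definition d_upper :: "real \<Rightarrow> real \<Rightarrow> real" where
  "d_upper a c = (1/2048) * (768*a^3 - 512*a^2 - 512*a*c + 104*a + 192*c - 7)"

lemma d_upper_c_lower_eq_d_lower: "d_upper a (c_lower a) = d_lower a (c_lower a)"
  unfolding d_upper_def d_lower_def c_lower_def by algebra

lemma lam_neg_at_apex:
  assumes "11/5 \<le> a" and "36*a - 1 \<le> of_int k" and "of_int k \<le> 36*a"
  shows "lam k a (c_lower a) (d_lower a (c_lower a)) < 0"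
proof -
  define x where "x = real_of_int k"
  define \<beta> where "\<beta> = -48*a^4 + 2*a^3 + 11/4*a^2 + 7/32*a"
  define \<gamma> where "\<gamma> = 1536*a^5 + 192*a^4 - 52*a^3 - 10*a^2 - 7/16*a"
  define b where "b = a - 11/5"
  have a_eq: "a = 11/5 + b" and "0 \<le> b" using assms(1) by (simp_all add: b_def)
  have "\<beta>*(36*a) + \<gamma> = -(161070327/50000 + 21143271/2000*b + 498781/40*b^2 + 34613/5*b^3
      + 1848*b^4 + 192*b^5)"
    unfolding \<beta>_def \<gamma>_def a_eq by algebra
  also have "\<dots> < 0"
    unfolding neg_less_0_iff_less using \<open>0 \<le> b\<close>
    by (intro add_pos_nonneg mult_nonneg_nonneg zero_le_power) auto
  finally have hi: "\<beta>*(36*a) + \<gamma> < 0" .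
  have "\<beta>*(36*a - 1) + \<gamma> = -(213206499/100000 + 34274313/4000*b + 2218311/200*b^2
      + 32511/5*b^3 + 1800*b^4 + 192*b^5)"
    unfolding \<beta>_def \<gamma>_def a_eq by algebra
  also have "\<dots> < 0"
    unfolding neg_less_0_iff_less using \<open>0 \<le> b\<close>
    by (intro add_pos_nonneg mult_nonneg_nonneg zero_le_power) auto
  finally have lo: "\<beta>*(36*a - 1) + \<gamma> < 0" .
  have "\<beta>*x + \<gamma> < 0"
    using affine_neg_between[of "\<lambda>t. \<beta>*t + \<gamma>" "36*a - 1" x "36*a"] lo hi assms
    by (simp add: x_def)
  moreover have "0 < x - 1" using assms by (simp add: x_def)
  moreover have "lam k a (c_lower a) (d_lower a (c_lower a)) = (x - 1) * (\<beta>*x + \<gamma>)"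
    unfolding lam_def c_lower_def d_lower_def Let_def x_def \<beta>_def \<gamma>_def by algebra
  ultimately show ?thesis by (simp add: mult_pos_neg)
qed

lemma lam_neg_at_lower_corner:
  assumes "11/5 \<le> a" and "36*a - 1 \<le> of_int k" and "of_int k \<le> 36*a"
  shows "lam k a (c_upper a) (d_lower a (c_upper a)) < 0"
proof -
  define x where "x = real_of_int k"
  define \<alpha> where "\<alpha> = 48*a^5 - 72*a^4 - 3/2*a^3 + 27/8*a^2 + 75/256*a"
  define \<beta> where "\<beta> = -2304*a^6 + 2544*a^5 + 480*a^4 - 147/2*a^3 - 291/16*a^2 - 225/256*a"
  define \<gamma> where "\<gamma> = 18432*a^7 - 6912*a^6 - 3936*a^5 - 168*a^4 + 207/2*a^3 + 237/16*a^2 + 75/128*a"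
  define b where "b = a - 11/5"
  have a_eq: "a = 11/5 + b" and "0 \<le> b" using assms(1) by (simp_all add: b_def)
  have "0 \<le> 630486153/800000 + 16312851/6400*b + 602727/200*b^2 + 16881/10*b^3 + 456*b^4 + 48*b^5"
    using \<open>0 \<le> b\<close> by (intro add_nonneg_nonneg mult_nonneg_nonneg zero_le_power) auto
  also have "\<dots> = \<alpha>" unfolding \<alpha>_def a_eq by algebra
  finally have "0 \<le> \<alpha>" .
  have "\<alpha>*(36*a)^2 + \<beta>*(36*a) + \<gamma> = -(9321514005177/10000000 + 6202191491649/2000000*b
      + 854293161501/200000*b^2 + 6327396693/2000*b^3 + 33973968/25*b^4 + 8420664/25*b^5
      + 220608/5*b^6 + 2304*b^7)"
    unfolding \<alpha>_def \<beta>_def \<gamma>_def a_eq by algebra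
  also have "\<dots> < 0"
    unfolding neg_less_0_iff_less using \<open>0 \<le> b\<close>
    by (intro add_pos_nonneg mult_nonneg_nonneg zero_le_power) auto
  finally have hi: "\<alpha>*(36*a)^2 + \<beta>*(36*a) + \<gamma> < 0" .
  have "\<alpha>*(36*a - 1)^2 + \<beta>*(36*a - 1) + \<gamma> = -(9364523492907/10000000 + 6327730518579/2000000*b
      + 880812765351/200000*b^2 + 6566014533/2000*b^3 + 35336748/25*b^4 + 8733624/25*b^5
      + 226368/5*b^6 + 2304*b^7)"
    unfolding \<alpha>_def \<beta>_def \<gamma>_def a_eq by algebra
  also have "\<dots> < 0"
    unfolding neg_less_0_iff_less using \<open>0 \<le> b\<close>
    by (intro add_pos_nonneg mult_nonneg_nonneg zero_le_power) auto
  finally have lo: "\<alpha>*(36*a - 1)^2 + \<beta>*(36*a - 1) + \<gamma> < 0" .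
  have "\<alpha>*x^2 + \<beta>*x + \<gamma> < 0"
    using convex_quadratic_neg_between[OF \<open>0 \<le> \<alpha>\<close> _ _ lo hi] assms by (simp add: x_def)
  moreover have "lam k a (c_upper a) (d_lower a (c_upper a)) = \<alpha>*x^2 + \<beta>*x + \<gamma>"
    unfolding lam_def c_upper_def d_lower_def Let_def x_def \<alpha>_def \<beta>_def \<gamma>_def by algebra
  ultimately show ?thesis by simp
qed

lemma lam_neg_at_upper_corner:
  assumes "11/5 \<le> a" and "36*a - 1 \<le> of_int k" and "of_int k \<le> 36*a"
  shows "lam k a (c_upper a) (d_upper a (c_upper a)) < 0"
proof -
  define x where "x = real_of_int k"
  define \<alpha> where "\<alpha> = 3/2*a^4 - 3/4*a^3 - 7/64*a^2 + 5/256*a + 19/8192"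
  define \<beta> where "\<beta> = -96*a^5 - 15/2*a^4 + 51/4*a^3 + 131/64*a^2 - 7/256*a - 95/8192"
  define \<gamma> where "\<gamma> = 1152*a^6 + 1152*a^5 + 21*a^4 - 111/2*a^3 - 51/8*a^2 - 3/128*a + 57/4096"
  define b where "b = a - 11/5"
  have a_eq: "a = 11/5 + b" and "0 \<le> b" using assms(1) by (simp_all add: b_def)
  have "0 \<le> 136541763/5120000 + 1681161/32000*b + 61601/1600*b^2 + 249/20*b^3 + 3/2*b^4"
    using \<open>0 \<le> b\<close> by (intro add_nonneg_nonneg mult_nonneg_nonneg zero_le_power) auto
  also have "\<dots> = \<alpha>" unfolding \<alpha>_def a_eq by algebra
  finally have "0 \<le> \<alpha>" .
  have "\<alpha>*(36*a)^2 + \<beta>*(36*a) + \<gamma> = -(474754101237/12800000 + 136756740591/1280000*b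
      + 1612491693/12800*b^2 + 156003/2*b^3 + 107151/4*b^4 + 4842*b^5 + 360*b^6)"
    unfolding \<alpha>_def \<beta>_def \<gamma>_def a_eq by algebra
  also have "\<dots> < 0"
    unfolding neg_less_0_iff_less using \<open>0 \<le> b\<close>
    by (intro add_pos_nonneg mult_nonneg_nonneg zero_le_power) auto
  finally have hi: "\<alpha>*(36*a)^2 + \<beta>*(36*a) + \<gamma> < 0" .
  have "\<alpha>*(36*a - 1)^2 + \<beta>*(36*a - 1) + \<gamma> = -(116192560131/3200000 + 135245969541/1280000*b
      + 321189993/2560*b^2 + 3121341/40*b^3 + 107427/4*b^4 + 4854*b^5 + 360*b^6)"
    unfolding \<alpha>_def \<beta>_def \<gamma>_def a_eq by algebra
  also have "\<dots> < 0"
    unfolding neg_less_0_iff_less using \<open>0 \<le> b\<close>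
    by (intro add_pos_nonneg mult_nonneg_nonneg zero_le_power) auto
  finally have lo: "\<alpha>*(36*a - 1)^2 + \<beta>*(36*a - 1) + \<gamma> < 0" .
  have "\<alpha>*x^2 + \<beta>*x + \<gamma> < 0"
    using convex_quadratic_neg_between[OF \<open>0 \<le> \<alpha>\<close> _ _ lo hi] assms by (simp add: x_def)
  moreover have "0 < x - 1" using assms by (simp add: x_def)
  moreover have "lam k a (c_upper a) (d_upper a (c_upper a)) = (x - 1) * (\<alpha>*x^2 + \<beta>*x + \<gamma>)"
    unfolding lam_def c_upper_def d_upper_def Let_def x_def \<alpha>_def \<beta>_def \<gamma>_def by algebra
  ultimately show ?thesis by (simp add: mult_pos_neg)
qed

theorem lemma7p5:
  fixes a c d :: real
  assumes "a > 22/10"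
    and "(1/192) * (-768*a^3 + 768*a^2 - 160*a + 7) \<le> c"
    and "c \<le> (1/512) * (-1536*a^3 + 1728*a^2 - 424*a + 25)"
    and "(1/2) * (-6*a^4 + 6*a^3 - a^2 - 2*a*c) \<le> d"
    and "d \<le> (1/2048) * (768*a^3 - 512*a^2 - 512*a*c + 104*a + 192*c - 7)"
  shows "\<exists>k::int. k \<ge> 4 \<and> lam k a c d < 0"
proof -
  define k where "k = \<lfloor>36*a\<rfloor>"
  have a: "11/5 \<le> a" using assms(1) by simp
  have k: "36*a - 1 \<le> of_int k" "of_int k \<le> 36*a" unfolding k_def by linarith+
  have c: "c_lower a \<le> c" "c \<le> c_upper a" and d: "d_lower a c \<le> d" "d \<le> d_upper a c"
    using assms(2-5) by (simp_all only: c_lower_def c_upper_def d_lower_def d_upper_def)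
  have lower_edge: "lam k a c (d_lower a c) < 0"
    by (rule affine_neg_between[where f = "\<lambda>c. lam k a c (d_lower a c)",
          OF _ c lam_neg_at_apex[OF a k] lam_neg_at_lower_corner[OF a k]])
      (simp add: lam_def d_lower_def Let_def, algebra)
  have upper_edge: "lam k a c (d_upper a c) < 0"
    by (rule affine_neg_between[where f = "\<lambda>c. lam k a c (d_upper a c)",
          OF _ c lam_neg_at_apex[OF a k, folded d_upper_c_lower_eq_d_lower]
          lam_neg_at_upper_corner[OF a k]])
      (simp add: lam_def d_upper_def Let_def, algebra)
  have "lam k a c d < 0"
    by (rule affine_neg_between[where f = "lam k a c", OF _ d lower_edge upper_edge])
      (simp add: lam_def Let_def, algebra)
  moreover have "4 \<le> k" using a k by simp
  ultimately show ?thesis by blast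
qed

end
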